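(* Let $X_1,\ldots,X_m$ be independent $\mathbb{R}^d$-valued random variables, each with an absolutely continuous distribution and finite $h(X_j)$, and let $a_1,\ldots,a_m\in\mathbb{R}$ be not all zero, with $h(\sum_j a_jX_j)$ finite. For $N>0$ let $X_1^{(N)},\ldots,X_m^{(N)}$ be independent with $X_j^{(N)}$ distributed as $X_j$ conditioned on $X_j\in[-N,N]^d$. Then $$\lim_{N\to\infty}h\Big(\sum_{j=1}^m a_jX_j^{(N)}\Big)=h\Big(\sum_{j=1}^m a_jX_j\Big).$$
   Context: $h$ denotes differential entropy w.r.t. Lebesgue measure. The conditional law of $X$ given $X\in[-N,N]^d$ has density $f_X(x)\mathbf 1\{x\in[-N,N]^d\}/P(X\in[-N,N]^d)$. *)

theory Defs
  imports "HOL-Probability.Probability"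
begin

definition cube :: "real \<Rightarrow> (real ^ 'd) set" where
  "cube N = {x. \<forall>i. \<bar>x $ i\<bar> \<le> N}"

end

theory Submission
  imports Defs "HOL-Real_Asymp.Real_Asymp"
begin

(* Let E_N be the event that every X_j lies in the cube [-N,N]^d.  By independence, the family
   (X_j^(N))_j has the law of (X_j)_j conditioned on E_N, so S_N = \<Sum> a_j X_j^(N) has the law of
   S = \<Sum> a_j X_j under P( - | E_N), i.e. the density q_N / P(E_N), where q_N is the density of the
   law of S restricted to E_N.  The q_N are dominated by the density f of S, increase with N and have
   mass P(E_N) \<longrightarrow> 1, so q_N \<longrightarrow> f almost everywhere.  As |t ln t| \<le> 2 |f ln f| + 4 f for 0 \<le> t \<le> 2 f,
   dominated convergence gives h(S_N) \<longrightarrow> h(S).  Only the finiteness of h(S) is needed, not that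
   of the h(X_j). *)

section \<open>The function t ln t\<close>

lemma abs_mult_ln_le_of_le:
  fixes t u :: real
  assumes "0 \<le> t" "t \<le> u"
  shows "\<bar>t * ln t\<bar> \<le> \<bar>u * ln u\<bar> + u"
proof (cases "t = 0")
  case False
  then have "0 < t" "0 < u" using assms by auto
  have "ln (1/t) \<le> 1/t - 1" "ln (u/t) \<le> u/t - 1"
    using \<open>0 < t\<close> \<open>0 < u\<close> by (intro ln_le_minus_one; simp)+
  then have "- (t * ln t) \<le> 1 - t" "t * (ln u - ln t) \<le> u - t"
    using \<open>0 < t\<close> \<open>0 < u\<close> by (simp_all add: ln_div field_simps)
  moreover have "t * ln t \<le> u * ln u" if "1 \<le> t"
    using that assms by (intro mult_mono) auto
  moreover have "- (t * ln u) \<le> - (u * ln u)" if "u \<le> 1"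
    using that assms \<open>0 < u\<close> by (simp add: mult_right_mono_neg)
  moreover have "0 \<le> u * ln u" if "1 \<le> u" using that by simp
  moreover have "t * ln t < 0" if "t < 1" using that \<open>0 < t\<close> by (simp add: mult_pos_neg)
  moreover have "u * ln u \<le> 0" if "u \<le> 1" using that \<open>0 < u\<close> by (simp add: mult_nonneg_nonpos)
  ultimately show ?thesis
    using assms by (cases "1 \<le> t"; cases "1 \<le> u") (auto simp: algebra_simps abs_if)
qed (use assms in simp)

lemma abs_mult_ln_le_of_le_double:
  fixes t f :: real
  assumes "0 \<le> t" "t \<le> 2 * f"
  shows "\<bar>t * ln t\<bar> \<le> 2 * \<bar>f * ln f\<bar> + 4 * f"
proof (cases "f = 0")
  case False
  then have "0 < f" using assms by simp
  have "\<bar>t * ln t\<bar> \<le> \<bar>(2 * f) * ln (2 * f)\<bar> + 2 * f"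
    by (rule abs_mult_ln_le_of_le[OF assms])
  also have "(2 * f) * ln (2 * f) = 2 * f * ln 2 + 2 * (f * ln f)"
    using \<open>0 < f\<close> by (simp add: ln_mult algebra_simps)
  also have "\<bar>2 * f * ln 2 + 2 * (f * ln f)\<bar> \<le> \<bar>2 * f * ln 2\<bar> + \<bar>2 * (f * ln f)\<bar>"
    by (rule abs_triangle_ineq)
  also have "\<dots> \<le> 2 * f + 2 * \<bar>f * ln f\<bar>"
    using \<open>0 < f\<close> ln_le_minus_one[of 2] by (simp add: abs_mult)
  finally show ?thesis by simp
qed (use assms in simp)

lemma continuous_on_mult_ln: "continuous_on {0..} (\<lambda>t::real. t * ln t)"
proof (rule continuous_on_eq_continuous_within[THEN iffD2], intro ballI)
  fix t :: real assume "t \<in> {0..}"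
  show "continuous (at t within {0..}) (\<lambda>t. t * ln t)"
  proof (cases "t = 0")
    case True
    have "((\<lambda>t::real. t * ln t) \<longlongrightarrow> 0) (at_right 0)"
      by real_asymp
    then show ?thesis
      unfolding True continuous_within at_within_Ici_at_right by simp
  next
    case False
    with \<open>t \<in> {0..}\<close> have "isCont (\<lambda>t. t * ln t) t"
      by (intro continuous_intros) auto
    then show ?thesis
      by (rule continuous_at_imp_continuous_within)
  qed
qed

section \<open>Densities of laws restricted to an event\<close>

lemma AE_le_of_emeasure_density_le:
  fixes f g :: "'a \<Rightarrow> ennreal"
  assumes [measurable]: "f \<in> borel_measurable M" "g \<in> borel_measurable M"
    and g_finite: "(\<integral>\<^sup>+x. g x \<partial>M) \<noteq> \<infinity>"
    and le: "\<And>A. A \<in> sets M \<Longrightarrow> emeasure (density M f) A \<le> emeasure (density M g) A"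
  shows "AE x in M. f x \<le> g x"
proof (rule ccontr)
  assume not_le: "\<not> (AE x in M. f x \<le> g x)"
  define A where "A = {x\<in>space M. g x < f x}"
  have A[measurable]: "A \<in> sets M" unfolding A_def by measurable
  have "(\<integral>\<^sup>+x. g x * indicator A x \<partial>M) \<le> (\<integral>\<^sup>+x. g x \<partial>M)"
    by (intro nn_integral_mono) (auto split: split_indicator)
  then have finite_A: "(\<integral>\<^sup>+x. g x * indicator A x \<partial>M) \<noteq> \<infinity>"
    using g_finite by (auto simp: top_unique)
  have "\<not> (AE x in M. f x * indicator A x \<le> g x * indicator A x)"
  proof
    assume "AE x in M. f x * indicator A x \<le> g x * indicator A x"
    with AE_space have "AE x in M. f x \<le> g x"
      by eventually_elim (auto simp: A_def not_less split: split_indicator_asm)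
    with not_le show False by simp
  qed
  then have "(\<integral>\<^sup>+x. g x * indicator A x \<partial>M) < (\<integral>\<^sup>+x. f x * indicator A x \<partial>M)"
    by (intro nn_integral_less finite_A) (auto simp: A_def split: split_indicator)
  moreover have "(\<integral>\<^sup>+x. f x * indicator A x \<partial>M) \<le> (\<integral>\<^sup>+x. g x * indicator A x \<partial>M)"
    using le[OF A] by (simp add: emeasure_density)
  ultimately show False by simp
qed

lemma density_indicator_space: "density M (indicator (space M)) = M"
  by (subst density_1[symmetric]) (auto intro!: density_cong)

lemma AE_le_of_distributed_restrict:
  fixes X :: "'w \<Rightarrow> 'a" and g g' :: "'a \<Rightarrow> ennreal"
  assumes g: "distributed (density M (indicator E)) L X g"
    and g': "distributed (density M (indicator E')) L X g'"
    and [measurable]: "E \<in> sets M" "E' \<in> sets M"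
    and "E \<subseteq> E'" "emeasure M E' \<noteq> \<infinity>"
  shows "AE x in L. g x \<le> g' x"
proof -
  have [measurable]: "X \<in> measurable M L"
    using distributed_measurable[OF g] by simp
  have [measurable]: "g \<in> borel_measurable L" "g' \<in> borel_measurable L"
    using g g' by (simp_all add: distributed_borel_measurable)
  have law: "emeasure (density L h) A = emeasure M (F \<inter> (X -` A \<inter> space M))"
    if "distributed (density M (indicator F)) L X h" "F \<in> sets M" "A \<in> sets L" for h F A
    using that by (simp add: distributed_distr_eq_density[symmetric] emeasure_distr emeasure_restricted)
  show ?thesis
  proof (rule AE_le_of_emeasure_density_le)
    have "(\<integral>\<^sup>+x. g' x \<partial>L) = emeasure (density L g') (space L)"
      by (auto simp: emeasure_density intro!: nn_integral_cong)
    also have "\<dots> = emeasure M (E' \<inter> (X -` space L \<inter> space M))"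
      using law[OF g'] by simp
    also have "\<dots> \<le> emeasure M E'"
      by (intro emeasure_mono) auto
    finally show "(\<integral>\<^sup>+x. g' x \<partial>L) \<noteq> \<infinity>"
      using \<open>emeasure M E' \<noteq> \<infinity>\<close> by (auto simp: top_unique)
    show "emeasure (density L g) A \<le> emeasure (density L g') A" if "A \<in> sets L" for A
      using that \<open>E \<subseteq> E'\<close> by (simp add: law[OF g] law[OF g']) (intro emeasure_mono; auto)
  qed measurable
qed

lemma AE_le_of_distributed_restrict_space:
  fixes X :: "'w \<Rightarrow> 'a" and g f :: "'a \<Rightarrow> ennreal"
  assumes "distributed (density M (indicator E)) L X g" "distributed M L X f"
    and "E \<in> sets M" "emeasure M (space M) \<noteq> \<infinity>"
  shows "AE x in L. g x \<le> f x"
  using assms sets.sets_into_space[OF assms(3)]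
  by (intro AE_le_of_distributed_restrict[of M E L X g "space M"]) (auto simp: density_indicator_space)

lemma distributed_restrict_realE:
  fixes X :: "'w \<Rightarrow> 'a" and f :: "'a \<Rightarrow> real"
  assumes "sigma_finite_measure L" and X: "distributed M L X f"
    and f_nonneg: "\<And>x. x \<in> space L \<Longrightarrow> 0 \<le> f x"
    and [measurable]: "E \<in> sets M" and "emeasure M (space M) \<noteq> \<infinity>"
  obtains g :: "'a \<Rightarrow> real"
  where "distributed (density M (indicator E)) L X g" "\<And>x. 0 \<le> g x"
proof -
  interpret L: sigma_finite_measure L by fact
  have [measurable]: "X \<in> measurable M L" "f \<in> borel_measurable L"
    using distributed_measurable[OF X] distributed_real_measurable[OF f_nonneg X] by auto
  define K where "K = distr (density M (indicator E)) L X"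
  define q where "q = RN_deriv L K"
  have "absolutely_continuous L K"
    unfolding absolutely_continuous_def
  proof
    fix A assume A: "A \<in> null_sets L"
    then have "A \<in> null_sets (density L f)"
      using absolutely_continuousI_density[of f L] by (auto simp: absolutely_continuous_def)
    then have "emeasure M (X -` A \<inter> space M) = 0"
      using A by (auto simp: distributed_distr_eq_density[OF X, symmetric] emeasure_distr null_sets_def)
    moreover have "emeasure K A = emeasure M (E \<inter> (X -` A \<inter> space M))"
      using A unfolding K_def by (subst emeasure_distr) (auto simp: emeasure_restricted)
    ultimately have "emeasure K A = 0"
      using A by (metis emeasure_eq_0 inf_le2 measurable_sets null_setsD2 \<open>X \<in> measurable M L\<close>)
    with A show "A \<in> null_sets K" by (simp add: null_sets_def K_def)
  qed
  then have q: "distributed (density M (indicator E)) L X q"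
    unfolding distributed_def q_def by (auto simp: L.density_RN_deriv K_def)
  have "AE x in L. q x \<le> ennreal (f x)"
    using AE_le_of_distributed_restrict_space[OF q X] \<open>emeasure M (space M) \<noteq> \<infinity>\<close> by simp
  then have "AE x in L. ennreal (enn2real (q x)) = q x"
    by eventually_elim (metis ennreal_enn2real ennreal_less_top le_less_trans)
  then have "distributed (density M (indicator E)) L X (\<lambda>x. enn2real (q x))"
    using q by (auto simp: distributed_def intro!: density_cong)
  then show ?thesis
    using that[of "\<lambda>x. enn2real (q x)"] by auto
qed

lemma distributed_uniform_measure:
  fixes X :: "'w \<Rightarrow> 'a" and g :: "'a \<Rightarrow> real"
  assumes g: "distributed (density M (indicator E)) L X g" and g_nonneg: "\<And>x. 0 \<le> g x"
    and [measurable]: "E \<in> sets M" and "emeasure M E \<noteq> \<infinity>" "0 < measure M E"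
  shows "distributed (uniform_measure M E) L X (\<lambda>x. g x / measure M E)"
proof -
  have [measurable]: "X \<in> measurable M L"
    using distributed_measurable[OF g] by simp
  have [measurable]: "g \<in> borel_measurable L"
    using distributed_real_measurable[OF _ g] g_nonneg by simp
  define c where "c = 1 / ennreal (measure M E)"
  have "uniform_measure M E = density (density M (indicator E)) (\<lambda>_. c)"
    unfolding uniform_measure_def c_def using \<open>emeasure M E \<noteq> \<infinity>\<close>
    by (subst density_density_eq) (auto simp: emeasure_eq_ennreal_measure divide_ennreal_def)
  then have "distr (uniform_measure M E) L X = density (distr (density M (indicator E)) L X) (\<lambda>_. c)"
    by (simp add: density_distr)
  also have "\<dots> = density L (\<lambda>x. ennreal (g x) * c)"
    by (simp add: distributed_distr_eq_density[OF g] density_density_eq)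
  also have "(\<lambda>x. ennreal (g x) * c) = (\<lambda>x. ennreal (g x / measure M E))"
    using \<open>0 < measure M E\<close> g_nonneg by (simp add: c_def ennreal_times_divide divide_ennreal)
  finally show ?thesis
    by (simp add: distributed_def)
qed

lemma has_bochner_integral_distributed_restrict:
  fixes X :: "'w \<Rightarrow> 'a" and g :: "'a \<Rightarrow> real"
  assumes g: "distributed (density M (indicator E)) L X g" and g_nonneg: "\<And>x. 0 \<le> g x"
    and [measurable]: "E \<in> sets M" and "emeasure M E \<noteq> \<infinity>"
  shows "has_bochner_integral L g (measure M E)"
proof (rule has_bochner_integral_nn_integral)
  have [measurable]: "X \<in> measurable M L"
    using distributed_measurable[OF g] by simp
  show [measurable]: "g \<in> borel_measurable L"
    using distributed_real_measurable[OF _ g] g_nonneg by simp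
  have "(\<integral>\<^sup>+x. ennreal (g x) \<partial>L) = emeasure (density L g) (space L)"
    by (auto simp: emeasure_density intro!: nn_integral_cong)
  also have "\<dots> = emeasure M (E \<inter> (X -` space L \<inter> space M))"
    by (simp add: distributed_distr_eq_density[OF g, symmetric] emeasure_distr emeasure_restricted)
  also have "E \<inter> (X -` space L \<inter> space M) = E"
    using sets.sets_into_space[OF \<open>E \<in> sets M\<close>] measurable_space[OF \<open>X \<in> measurable M L\<close>] by auto
  finally show "(\<integral>\<^sup>+x. ennreal (g x) \<partial>L) = ennreal (measure M E)"
    using \<open>emeasure M E \<noteq> \<infinity>\<close> by (simp add: emeasure_eq_ennreal_measure)
qed (simp_all add: g_nonneg)

lemma AE_tendsto_distributed_restrict:
  fixes X :: "'w \<Rightarrow> 'a" and f :: "'a \<Rightarrow> real" and g :: "nat \<Rightarrow> 'a \<Rightarrow> real"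
  assumes "prob_space M" and X: "distributed M L X f" and f_nonneg: "\<And>x. 0 \<le> f x"
    and [measurable]: "\<And>n. E n \<in> sets M" and "incseq E"
    and E_lim: "(\<lambda>n. measure M (E n)) \<longlonglongrightarrow> 1"
    and g: "\<And>n. distributed (density M (indicator (E n))) L X (g n)"
    and g_nonneg: "\<And>n x. 0 \<le> g n x"
  shows "AE x in L. (\<lambda>n. g n x) \<longlonglongrightarrow> f x"
proof -
  interpret prob_space M by fact
  have X': "distributed (density M (indicator (space M))) L X f"
    using X by (simp add: density_indicator_space)
  have [measurable]: "f \<in> borel_measurable L" "g n \<in> borel_measurable L" for n
    using distributed_real_measurable[OF _ X] distributed_real_measurable[OF _ g] f_nonneg g_nonneg
    by auto
  have f_int: "integrable L f" "integral\<^sup>L L f = 1"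
    using has_bochner_integral_distributed_restrict[OF X'] f_nonneg
    by (simp_all add: prob_space has_bochner_integral_iff)
  have g_int: "integral\<^sup>L L (g n) = measure M (E n)" for n
    using has_bochner_integral_distributed_restrict[OF g] g_nonneg
    by (simp add: has_bochner_integral_iff)
  have "AE x in L. \<forall>n. g n x \<le> g (Suc n) x \<and> g n x \<le> f x"
    unfolding AE_all_countable
  proof
    fix n
    have "AE x in L. ennreal (g n x) \<le> ennreal (g (Suc n) x)"
      using \<open>incseq E\<close> by (intro AE_le_of_distributed_restrict[OF g g]) (auto simp: incseq_Suc_iff)
    moreover have "AE x in L. ennreal (g n x) \<le> ennreal (f x)"
      by (intro AE_le_of_distributed_restrict_space[OF g X]) auto
    ultimately show "AE x in L. g n x \<le> g (Suc n) x \<and> g n x \<le> f x"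
      by eventually_elim (simp add: f_nonneg g_nonneg)
  qed
  then have mono_bdd: "AE x in L. incseq (\<lambda>n. g n x) \<and> (\<forall>n. g n x \<le> f x)"
    by eventually_elim (simp add: incseq_Suc_iff)
  define u where "u x = lim (\<lambda>n. g n x)" for x
  have [measurable]: "u \<in> borel_measurable L"
    unfolding u_def by measurable
  have u_lim: "AE x in L. (\<lambda>n. g n x) \<longlonglongrightarrow> u x"
    using mono_bdd by eventually_elim
      (metis LIMSEQ_incseq_SUP bdd_aboveI2 convergentI convergent_LIMSEQ_iff u_def)
  have u_le: "AE x in L. u x \<le> f x"
    using u_lim mono_bdd by eventually_elim (auto intro: LIMSEQ_le_const2)
  have dom: "AE x in L. norm (g n x) \<le> f x" for n
    using mono_bdd by eventually_elim (simp add: g_nonneg)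
  have "(\<lambda>n. measure M (E n)) \<longlonglongrightarrow> integral\<^sup>L L u"
    using integral_dominated_convergence[OF _ _ f_int(1) u_lim dom] by (simp add: g_int)
  then have "integral\<^sup>L L u = integral\<^sup>L L f"
    using LIMSEQ_unique[OF _ E_lim] f_int(2) by auto
  moreover have "integrable L u"
    using integrable_dominated_convergence[OF _ _ f_int(1) u_lim dom] by simp
  ultimately have "AE x in L. f x - u x = 0"
    using u_le f_int(1) by (subst integral_nonneg_eq_0_iff_AE[symmetric]) auto
  with u_lim show ?thesis
    by eventually_elim simp
qed

lemma AE_tendsto_distributed_restrict_at_top:
  fixes X :: "'w \<Rightarrow> 'a" and f :: "'a \<Rightarrow> real" and g :: "real \<Rightarrow> 'a \<Rightarrow> real"
    and E :: "real \<Rightarrow> 'w set" and Z :: "nat \<Rightarrow> real"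
  assumes "prob_space M" and X: "distributed M L X f" and f_nonneg: "\<And>x. 0 \<le> f x"
    and [measurable]: "\<And>t. E t \<in> sets M" and "mono E"
    and E_lim: "((\<lambda>t. measure M (E t)) \<longlongrightarrow> 1) at_top"
    and g: "\<And>t. distributed (density M (indicator (E t))) L X (g t)"
    and g_nonneg: "\<And>t x. 0 \<le> g t x"
    and Z: "filterlim Z at_top sequentially"
  shows "AE x in L. (\<lambda>k. g (Z k) x) \<longlonglongrightarrow> f x"
proof -
  interpret prob_space M by fact
  have le: "AE x in L. g s x \<le> g t x" if "s \<le> t" for s t
    using AE_le_of_distributed_restrict[OF g g] \<open>mono E\<close> that
    by (simp add: g_nonneg monoD)
  have le_f: "AE x in L. g t x \<le> f x" for t
    using AE_le_of_distributed_restrict_space[OF g X]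
    by (simp add: f_nonneg g_nonneg)
  have "AE x in L. (\<lambda>n. g (real n) x) \<longlonglongrightarrow> f x"
    using filterlim_compose[OF E_lim filterlim_real_sequentially] \<open>mono E\<close>
    by (intro AE_tendsto_distributed_restrict[OF \<open>prob_space M\<close> X f_nonneg _ _ _ g g_nonneg])
      (auto simp: incseq_def monoD o_def)
  \<comment> \<open>Monotonicity in \<open>t\<close> holds only almost everywhere for each pair of indices, so \<open>g (Z k)\<close> is
    compared with the countably many \<open>g \<lfloor>Z k\<rfloor>\<close>, which converge along the naturals.\<close>
  moreover have "AE x in L. \<forall>k. (0 \<le> Z k \<longrightarrow> g (real (nat \<lfloor>Z k\<rfloor>)) x \<le> g (Z k) x) \<and> g (Z k) x \<le> f x"
    unfolding AE_all_countable
  proof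
    fix k
    have "0 \<le> Z k \<Longrightarrow> real (nat \<lfloor>Z k\<rfloor>) \<le> Z k" by linarith
    then have "AE x in L. 0 \<le> Z k \<longrightarrow> g (real (nat \<lfloor>Z k\<rfloor>)) x \<le> g (Z k) x"
      using le by (cases "0 \<le> Z k") auto
    with le_f show "AE x in L. (0 \<le> Z k \<longrightarrow> g (real (nat \<lfloor>Z k\<rfloor>)) x \<le> g (Z k) x) \<and> g (Z k) x \<le> f x"
      by eventually_elim auto
  qed
  ultimately show ?thesis
  proof eventually_elim
    case (elim x)
    have lower: "(\<lambda>k. g (real (nat \<lfloor>Z k\<rfloor>)) x) \<longlonglongrightarrow> f x"
      using filterlim_compose[OF elim(1) filterlim_compose[OF filterlim_nat_sequentially
            filterlim_compose[OF filterlim_floor_sequentially Z]]] by (simp add: o_def)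
    have "eventually (\<lambda>k. 0 \<le> Z k) sequentially"
      using Z by (simp add: filterlim_at_top)
    then have "eventually (\<lambda>k. g (real (nat \<lfloor>Z k\<rfloor>)) x \<le> g (Z k) x) sequentially"
      using elim(2) by (auto elim: eventually_mono)
    then show ?case
      using elim(2) by (intro tendsto_sandwich[OF _ _ lower tendsto_const]) auto
  qed
qed

section \<open>Entropy under conditioning on an increasing family of events\<close>

lemma tendsto_integral_normalized_mult_ln:
  fixes f :: "'a \<Rightarrow> real" and g :: "nat \<Rightarrow> 'a \<Rightarrow> real" and p :: "nat \<Rightarrow> real"
  assumes f_int: "integrable L f" and f_ln: "integrable L (\<lambda>x. f x * ln (f x))"
    and [measurable]: "\<And>k. g k \<in> borel_measurable L"
    and g_nonneg: "\<And>k x. 0 \<le> g k x" and g_le: "\<And>k. AE x in L. g k x \<le> f x"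
    and g_lim: "AE x in L. (\<lambda>k. g k x) \<longlonglongrightarrow> f x"
    and p_lim: "p \<longlonglongrightarrow> 1" and p_gt: "\<And>k. 1/2 < p k"
  shows "(\<lambda>k. \<integral>x. g k x / p k * ln (g k x / p k) \<partial>L) \<longlonglongrightarrow> (\<integral>x. f x * ln (f x) \<partial>L)"
proof (rule integral_dominated_convergence[where w = "\<lambda>x. 2 * \<bar>f x * ln (f x)\<bar> + 4 * f x"])
  have [measurable]: "f \<in> borel_measurable L"
    using f_int by (rule borel_measurable_integrable)
  show "(\<lambda>x. f x * ln (f x)) \<in> borel_measurable L"
    "(\<lambda>x. g k x / p k * ln (g k x / p k)) \<in> borel_measurable L" for k
    by measurable
  show "integrable L (\<lambda>x. 2 * \<bar>f x * ln (f x)\<bar> + 4 * f x)"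
    using f_int f_ln by auto
  show "AE x in L. norm (g k x / p k * ln (g k x / p k)) \<le> 2 * \<bar>f x * ln (f x)\<bar> + 4 * f x" for k
    using g_le[of k]
  proof eventually_elim
    case (elim x)
    have "1 * f x \<le> (2 * p k) * f x"
      using elim p_gt[of k] g_nonneg[of k x] by (intro mult_right_mono) auto
    then have "g k x \<le> 2 * p k * f x"
      using elim by linarith
    then have "g k x / p k \<le> 2 * f x"
      using p_gt[of k] by (simp add: divide_le_eq mult.commute mult.left_commute)
    moreover have "0 \<le> g k x / p k"
      using g_nonneg[of k x] p_gt[of k] by simp
    ultimately show ?case
      unfolding real_norm_def by (rule abs_mult_ln_le_of_le_double[rotated])
  qed
  show "AE x in L. (\<lambda>k. g k x / p k * ln (g k x / p k)) \<longlonglongrightarrow> f x * ln (f x)"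
    using g_lim
  proof eventually_elim
    case (elim x)
    then have "(\<lambda>k. g k x / p k) \<longlonglongrightarrow> f x"
      using tendsto_divide[OF elim p_lim] by simp
    moreover have "0 \<le> f x"
      using elim g_nonneg by (auto intro: LIMSEQ_le_const)
    moreover have "0 \<le> g k x / p k" for k
      using g_nonneg[of k x] p_gt[of k] by simp
    ultimately show ?case
      by (intro continuous_within_tendsto_compose'[OF continuous_on_mult_ln[unfolded
            continuous_on_eq_continuous_within, rule_format]]) auto
  qed
qed

lemma tendsto_integral_normalized_mult_ln_at_top:
  fixes f :: "'a \<Rightarrow> real" and g :: "real \<Rightarrow> 'a \<Rightarrow> real" and p :: "real \<Rightarrow> real"
  assumes f_int: "integrable L f" and f_ln: "integrable L (\<lambda>x. f x * ln (f x))"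
    and [measurable]: "\<And>t. g t \<in> borel_measurable L"
    and g_nonneg: "\<And>t x. 0 \<le> g t x" and g_le: "\<And>t. AE x in L. g t x \<le> f x"
    and g_lim: "\<And>Z. filterlim Z at_top sequentially \<Longrightarrow> AE x in L. (\<lambda>k. g (Z k) x) \<longlonglongrightarrow> f x"
    and p_lim: "(p \<longlongrightarrow> 1) at_top"
  shows "((\<lambda>t. \<integral>x. g t x / p t * ln (g t x / p t) \<partial>L) \<longlongrightarrow> (\<integral>x. f x * ln (f x) \<partial>L)) at_top"
proof (rule tendsto_at_topI_sequentially)
  fix Z :: "nat \<Rightarrow> real" assume Z: "filterlim Z at_top sequentially"
  have "eventually (\<lambda>k. 1/2 < p (Z k)) sequentially"
    using filterlim_iff[THEN iffD1, OF Z, rule_format, OF order_tendstoD(1)[OF p_lim, of "1/2"]] by simp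
  then obtain K where K: "\<And>k. K \<le> k \<Longrightarrow> 1/2 < p (Z k)"
    by (auto simp: eventually_sequentially)
  define Z' where "Z' k = Z (k + K)" for k
  have Z': "filterlim Z' at_top sequentially"
    unfolding Z'_def by (rule filterlim_compose[OF Z filterlim_add_const_nat_at_top, unfolded o_def])
  have "(\<lambda>k. \<integral>x. g (Z' k) x / p (Z' k) * ln (g (Z' k) x / p (Z' k)) \<partial>L) \<longlonglongrightarrow> (\<integral>x. f x * ln (f x) \<partial>L)"
  proof (rule tendsto_integral_normalized_mult_ln[OF f_int f_ln _ g_nonneg g_le g_lim[OF Z']])
    show "(\<lambda>k. p (Z' k)) \<longlonglongrightarrow> 1"
      using filterlim_compose[OF p_lim Z'] by (simp add: o_def)
    show "1/2 < p (Z' k)" for k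
      using K by (simp add: Z'_def)
  qed simp
  then show "(\<lambda>k. \<integral>x. g (Z k) x / p (Z k) * ln (g (Z k) x / p (Z k)) \<partial>L) \<longlonglongrightarrow> (\<integral>x. f x * ln (f x) \<partial>L)"
    unfolding Z'_def by (rule LIMSEQ_offset)
qed

lemma entropy_uniform_measure_distributed_restrict:
  fixes X :: "'w \<Rightarrow> 'a" and g :: "'a \<Rightarrow> real"
  assumes "prob_space M" and g: "distributed (density M (indicator E)) L X g"
    and g_nonneg: "\<And>x. 0 \<le> g x" and "E \<in> sets M" "0 < measure M E"
  shows "prob_space.entropy (uniform_measure M E) (exp 1) L X =
    - (\<integral>x. g x / measure M E * ln (g x / measure M E) \<partial>L)"
proof -
  interpret prob_space M by fact
  interpret U: information_space "uniform_measure M E" "exp 1"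
    using \<open>0 < measure M E\<close>
    by (intro information_space.intro prob_space_uniform_measure)
      (simp_all add: information_space_axioms_def emeasure_eq_measure)
  have "U.entropy (exp 1) L X =
      - (\<integral>x. g x / measure M E * log (exp 1) (g x / measure M E) \<partial>L)"
    using distributed_uniform_measure[OF g g_nonneg \<open>E \<in> sets M\<close> _ \<open>0 < measure M E\<close>] g_nonneg
    by (intro U.entropy_distr) (simp_all add: emeasure_eq_measure)
  then show ?thesis
    by (simp add: log_def)
qed

lemma entropy_uniform_measure_tendsto:
  fixes X :: "'w \<Rightarrow> 'a" and f :: "'a \<Rightarrow> real" and E :: "real \<Rightarrow> 'w set"
  assumes "prob_space M" and "sigma_finite_measure L"
    and X: "distributed M L X f" and f_nonneg: "\<And>x. 0 \<le> f x"
    and f_ln: "integrable L (\<lambda>x. f x * ln (f x))"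
    and [measurable]: "\<And>t. E t \<in> sets M" and "mono E"
    and E_lim: "((\<lambda>t. measure M (E t)) \<longlongrightarrow> 1) at_top"
  shows "((\<lambda>t. prob_space.entropy (uniform_measure M (E t)) (exp 1) L X)
           \<longlongrightarrow> prob_space.entropy M (exp 1) L X) at_top"
proof -
  interpret prob_space M by fact
  interpret information_space M "exp 1" by standard simp
  have "\<exists>g :: 'a \<Rightarrow> real. distributed (density M (indicator (E t))) L X g \<and> (\<forall>x. (0::real) \<le> g x)" for t
  proof -
    obtain g :: "'a \<Rightarrow> real" where "distributed (density M (indicator (E t))) L X g" "\<And>x. 0 \<le> g x"
      by (rule distributed_restrict_realE[OF \<open>sigma_finite_measure L\<close> X f_nonneg \<open>E t \<in> sets M\<close>])
        (simp_all add: emeasure_space_1)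
    then show ?thesis by blast
  qed
  then obtain g :: "real \<Rightarrow> 'a \<Rightarrow> real" where g: "\<And>t. distributed (density M (indicator (E t))) L X (g t)"
    and g_nonneg: "\<And>t x. 0 \<le> g t x"
    by (metis choice)
  have "((\<lambda>t. \<integral>x. g t x / measure M (E t) * ln (g t x / measure M (E t)) \<partial>L)
      \<longlongrightarrow> (\<integral>x. f x * ln (f x) \<partial>L)) at_top"
  proof (rule tendsto_integral_normalized_mult_ln_at_top[OF _ f_ln _ g_nonneg _ _ E_lim])
    show "integrable L f"
      using distributed_integrable[OF X, of "\<lambda>_. 1"] f_nonneg by simp
    show "g t \<in> borel_measurable L" for t
      using distributed_real_measurable[OF _ g] g_nonneg by simp
    show "AE x in L. g t x \<le> f x" for t
      using AE_le_of_distributed_restrict_space[OF g X] by (simp add: f_nonneg g_nonneg)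
    show "AE x in L. (\<lambda>k. g (Z k) x) \<longlonglongrightarrow> f x" if "filterlim Z at_top sequentially" for Z
      by (rule AE_tendsto_distributed_restrict_at_top[OF \<open>prob_space M\<close> X f_nonneg _ \<open>mono E\<close> E_lim g
            g_nonneg that]) simp
  qed
  moreover have "eventually (\<lambda>t. 0 < measure M (E t)) at_top"
    using order_tendstoD(1)[OF E_lim zero_less_one] .
  then have "eventually (\<lambda>t. - (\<integral>x. g t x / measure M (E t) * ln (g t x / measure M (E t)) \<partial>L) =
      prob_space.entropy (uniform_measure M (E t)) (exp 1) L X) at_top"
    by eventually_elim (simp add: entropy_uniform_measure_distributed_restrict[OF \<open>prob_space M\<close> g g_nonneg])
  ultimately show ?thesis
    using entropy_distr[OF X] f_nonneg
    by (simp add: log_def tendsto_cong[symmetric] tendsto_minus)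
qed

section \<open>Independent families conditioned on a product event\<close>

lemma uniform_measure_distr:
  assumes [measurable]: "f \<in> measurable M N" "A \<in> sets N"
  shows "uniform_measure (distr M N f) A = distr (uniform_measure M (f -` A \<inter> space M)) N f"
proof -
  have "uniform_measure (distr M N f) A =
      density (distr M N f) (\<lambda>x. indicator A x / emeasure M (f -` A \<inter> space M))"
    by (simp add: uniform_measure_def emeasure_distr)
  also have "\<dots> = distr (density M (\<lambda>x. indicator A (f x) / emeasure M (f -` A \<inter> space M))) N f"
    by (rule density_distr) measurable
  also have "\<dots> = distr (uniform_measure M (f -` A \<inter> space M)) N f"
    unfolding uniform_measure_def
    by (intro distr_cong density_cong) (auto split: split_indicator)
  finally show ?thesis .
qed

lemma uniform_measure_PiM_PiE:
  assumes "finite I" and P: "\<And>i. i \<in> I \<Longrightarrow> prob_space (P i)"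
    and C: "\<And>i. i \<in> I \<Longrightarrow> C i \<in> sets (P i)"
    and pos: "\<And>i. i \<in> I \<Longrightarrow> 0 < measure (P i) (C i)"
  shows "uniform_measure (PiM I P) (PiE I C) = PiM I (\<lambda>i. uniform_measure (P i) (C i))"
proof -
  \<comment> \<open>\<open>product_prob_space\<close> needs a probability factor at every index, so pad outside \<open>I\<close>.\<close>
  define P' where "P' i = (if i \<in> I then P i else return (count_space UNIV) undefined)" for i
  define U where "U i = (if i \<in> I then uniform_measure (P i) (C i) else return (count_space UNIV) undefined)" for i
  have emeasure_P: "emeasure (P i) B = ennreal (measure (P i) B)" if "i \<in> I" for i B
    using P[OF that] by (simp add: prob_space_def finite_measure.emeasure_eq_measure)
  have "emeasure (P i) (C i) \<noteq> 0" if "i \<in> I" for i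
    using pos[OF that] by (simp add: emeasure_P[OF that])
  then interpret U: product_prob_space U
    unfolding U_def using P by (intro product_prob_spaceI) (auto intro: prob_space_uniform_measure
        prob_space_return simp: emeasure_P)
  interpret P': product_prob_space P'
    unfolding P'_def using P by (intro product_prob_spaceI) (auto intro: prob_space_return)
  have "PiM I P = PiM I P'" "PiM I (\<lambda>i. uniform_measure (P i) (C i)) = PiM I U"
    by (auto simp: P'_def U_def intro!: PiM_cong)
  moreover have "PiE I C \<in> sets (PiM I P')"
    using C \<open>finite I\<close> by (intro sets_PiM_I_finite) (auto simp: P'_def)
  moreover have "PiM I U = uniform_measure (PiM I P') (PiE I C)"
  proof (rule U.PiM_eqI[symmetric, OF \<open>finite I\<close>])
    show "sets (uniform_measure (PiM I P') (PiE I C)) = sets (PiM I U)"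
      by (auto simp: P'_def U_def intro!: sets_PiM_cong)
    fix A assume A: "\<And>i. i \<in> I \<Longrightarrow> A i \<in> sets (U i)"
    then have A': "A i \<in> sets (P i)" if "i \<in> I" for i
      using that by (simp add: U_def)
    have "emeasure (uniform_measure (PiM I P') (PiE I C)) (PiE I A) =
        emeasure (PiM I P') (PiE I (\<lambda>i. C i \<inter> A i)) / emeasure (PiM I P') (PiE I C)"
      using A' C \<open>finite I\<close> by (simp add: sets_PiM_I_finite PiE_Int P'_def)
    also have "\<dots> = ennreal (\<Prod>i\<in>I. measure (P i) (C i \<inter> A i)) / ennreal (\<Prod>i\<in>I. measure (P i) (C i))"
      using A' C P \<open>finite I\<close>
      by (simp add: P'.emeasure_PiM P'_def emeasure_P prod_ennreal)
    also have "\<dots> = ennreal (\<Prod>i\<in>I. measure (P i) (C i \<inter> A i) / measure (P i) (C i))"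
      using pos prod_pos[of I "\<lambda>i. measure (P i) (C i)"]
      by (simp add: divide_ennreal prod_nonneg prod_dividef)
    also have "\<dots> = (\<Prod>i\<in>I. emeasure (U i) (A i))"
      using A' C P pos
      by (simp add: U_def prod_ennreal emeasure_P divide_ennreal)
    finally show "emeasure (uniform_measure (PiM I P') (PiE I C)) (PiE I A) = (\<Prod>i\<in>I. emeasure (U i) (A i))" .
  qed
  ultimately show ?thesis
    by simp
qed

lemma distr_indep_vars_conditioned:
  fixes X :: "'i \<Rightarrow> 'w \<Rightarrow> 'b::topological_space" and Y :: "'i \<Rightarrow> 'v \<Rightarrow> 'b"
    and C :: "'i \<Rightarrow> 'b set" and T :: "('i \<Rightarrow> 'b) \<Rightarrow> 'c"
  assumes "prob_space M" "prob_space M'" "finite I" "I \<noteq> {}"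
    and indep_X: "prob_space.indep_vars M (\<lambda>_. borel) X I"
    and indep_Y: "prob_space.indep_vars M' (\<lambda>_. borel) Y I"
    and C: "\<And>i. i \<in> I \<Longrightarrow> C i \<in> sets borel"
    and pos: "\<And>i. i \<in> I \<Longrightarrow> 0 < measure M {\<omega> \<in> space M. X i \<omega> \<in> C i}"
    and law: "\<And>i A. i \<in> I \<Longrightarrow> A \<in> sets borel \<Longrightarrow>
      measure M' {\<omega> \<in> space M'. Y i \<omega> \<in> A} =
      measure M {\<omega> \<in> space M. X i \<omega> \<in> A \<inter> C i} / measure M {\<omega> \<in> space M. X i \<omega> \<in> C i}"
    and [measurable]: "T \<in> PiM I (\<lambda>_. borel) \<rightarrow>\<^sub>M N"
  shows "distr M' N (\<lambda>\<omega>. T (\<lambda>i\<in>I. Y i \<omega>)) =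
    distr (uniform_measure M {\<omega> \<in> space M. \<forall>i\<in>I. X i \<omega> \<in> C i}) N (\<lambda>\<omega>. T (\<lambda>i\<in>I. X i \<omega>))"
proof -
  interpret M: prob_space M by fact
  interpret M': prob_space M' by fact
  have [measurable]: "X i \<in> M \<rightarrow>\<^sub>M borel" "Y i \<in> M' \<rightarrow>\<^sub>M borel" if "i \<in> I" for i
    using indep_X indep_Y that by (auto simp: M.indep_vars_def M'.indep_vars_def)
  have [measurable]: "(\<lambda>\<omega>. \<lambda>i\<in>I. X i \<omega>) \<in> M \<rightarrow>\<^sub>M PiM I (\<lambda>_. borel)"
    "(\<lambda>\<omega>. \<lambda>i\<in>I. Y i \<omega>) \<in> M' \<rightarrow>\<^sub>M PiM I (\<lambda>_. borel)"
    by (auto intro!: measurable_restrict)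
  have C_PiM[measurable]: "PiE I C \<in> sets (PiM I (\<lambda>_. borel))"
    using C \<open>finite I\<close> by (intro sets_PiM_I_finite) auto
  have law_Y: "distr M' borel (Y i) = uniform_measure (distr M borel (X i)) (C i)" if "i \<in> I" for i
  proof (rule measure_eqI)
    fix A assume "A \<in> sets (distr M' borel (Y i))"
    with that C pos law show "emeasure (distr M' borel (Y i)) A = emeasure (uniform_measure (distr M borel (X i)) (C i)) A"
      by (simp add: emeasure_distr M.emeasure_eq_measure M'.emeasure_eq_measure divide_ennreal
          vimage_def Int_def conj_commute)
  qed simp
  have "distr M' (PiM I (\<lambda>_. borel)) (\<lambda>\<omega>. \<lambda>i\<in>I. Y i \<omega>) = PiM I (\<lambda>i. distr M' borel (Y i))"
    using indep_Y \<open>I \<noteq> {}\<close> by (subst (asm) M'.indep_vars_iff_distr_eq_PiM') auto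
  also have "\<dots> = PiM I (\<lambda>i. uniform_measure (distr M borel (X i)) (C i))"
    using law_Y by (intro PiM_cong) auto
  also have "\<dots> = uniform_measure (PiM I (\<lambda>i. distr M borel (X i))) (PiE I C)"
    using C pos \<open>finite I\<close>
    by (intro uniform_measure_PiM_PiE[symmetric] M.prob_space_distr) (auto simp: measure_distr vimage_def Int_def conj_commute)
  also have "PiM I (\<lambda>i. distr M borel (X i)) = distr M (PiM I (\<lambda>_. borel)) (\<lambda>\<omega>. \<lambda>i\<in>I. X i \<omega>)"
    using indep_X \<open>I \<noteq> {}\<close> by (subst (asm) M.indep_vars_iff_distr_eq_PiM') auto
  also have "uniform_measure \<dots> (PiE I C) = distr (uniform_measure M ((\<lambda>\<omega>. \<lambda>i\<in>I. X i \<omega>) -` PiE I C \<inter> space M))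
      (PiM I (\<lambda>_. borel)) (\<lambda>\<omega>. \<lambda>i\<in>I. X i \<omega>)"
    by (rule uniform_measure_distr) measurable
  also have "(\<lambda>\<omega>. \<lambda>i\<in>I. X i \<omega>) -` PiE I C \<inter> space M = {\<omega> \<in> space M. \<forall>i\<in>I. X i \<omega> \<in> C i}"
    by (auto simp: PiE_iff)
  finally have "distr M' (PiM I (\<lambda>_. borel)) (\<lambda>\<omega>. \<lambda>i\<in>I. Y i \<omega>) =
      distr (uniform_measure M {\<omega> \<in> space M. \<forall>i\<in>I. X i \<omega> \<in> C i}) (PiM I (\<lambda>_. borel))
        (\<lambda>\<omega>. \<lambda>i\<in>I. X i \<omega>)" .
  then have "distr (distr M' (PiM I (\<lambda>_. borel)) (\<lambda>\<omega>. \<lambda>i\<in>I. Y i \<omega>)) N T =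
      distr (distr (uniform_measure M {\<omega> \<in> space M. \<forall>i\<in>I. X i \<omega> \<in> C i}) (PiM I (\<lambda>_. borel))
        (\<lambda>\<omega>. \<lambda>i\<in>I. X i \<omega>)) N T"
    by simp
  then show ?thesis
    by (simp add: distr_distr comp_def)
qed

lemma distr_sum_indep_vars_conditioned:
  fixes X :: "nat \<Rightarrow> 'w \<Rightarrow> 'b::euclidean_space" and Y :: "nat \<Rightarrow> 'v \<Rightarrow> 'b"
  assumes "prob_space M" "prob_space M'" "0 < m"
    and "prob_space.indep_vars M (\<lambda>_. borel) X {..<m}"
    and "prob_space.indep_vars M' (\<lambda>_. borel) Y {..<m}"
    and "\<And>j. j < m \<Longrightarrow> C j \<in> sets borel"
    and "\<And>j. j < m \<Longrightarrow> 0 < measure M {\<omega> \<in> space M. X j \<omega> \<in> C j}"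
    and "\<And>j A. j < m \<Longrightarrow> A \<in> sets borel \<Longrightarrow>
      measure M' {\<omega> \<in> space M'. Y j \<omega> \<in> A} =
      measure M {\<omega> \<in> space M. X j \<omega> \<in> A \<inter> C j} / measure M {\<omega> \<in> space M. X j \<omega> \<in> C j}"
  shows "distr M' lborel (\<lambda>\<omega>. \<Sum>j<m. a j *\<^sub>R Y j \<omega>) =
    distr (uniform_measure M {\<omega> \<in> space M. \<forall>j\<in>{..<m}. X j \<omega> \<in> C j}) lborel
      (\<lambda>\<omega>. \<Sum>j<m. a j *\<^sub>R X j \<omega>)"
proof -
  have "(\<Sum>j<m. a j *\<^sub>R (\<lambda>i\<in>{..<m}. Z i) j) = (\<Sum>j<m. a j *\<^sub>R Z j)" for Z :: "nat \<Rightarrow> 'b"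
    by (intro sum.cong) auto
  moreover have "(\<lambda>y. \<Sum>j<m. a j *\<^sub>R y j) \<in> PiM {..<m} (\<lambda>_. borel) \<rightarrow>\<^sub>M lborel"
    by measurable
  ultimately show ?thesis
    using distr_indep_vars_conditioned[of M M' "{..<m}" X Y C "\<lambda>y. \<Sum>j<m. a j *\<^sub>R y j" lborel] assms
    by (simp add: lessThan_empty_iff)
qed

section \<open>Exhausting by cubes\<close>

lemma (in prob_space) tendsto_prob_mono_at_top:
  fixes E :: "real \<Rightarrow> 'a set"
  assumes [measurable]: "\<And>t. E t \<in> events" and "mono E"
    and exhaust: "\<And>\<omega>. \<omega> \<in> space M \<Longrightarrow> \<exists>t. \<omega> \<in> E t"
  shows "((\<lambda>t. prob (E t)) \<longlongrightarrow> 1) at_top"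
proof -
  have E_space: "E t \<subseteq> space M" for t
    by (rule sets.sets_into_space) simp
  have "(\<lambda>n. prob (E (real n))) \<longlonglongrightarrow> prob (\<Union>n. E (real n))"
    using \<open>mono E\<close> by (intro finite_Lim_measure_incseq) (auto simp: incseq_def monoD)
  moreover have "(\<Union>n. E (real n)) = space M"
  proof
    show "space M \<subseteq> (\<Union>n. E (real n))"
    proof
      fix \<omega> assume "\<omega> \<in> space M"
      then obtain t where "\<omega> \<in> E t" using exhaust by blast
      moreover have "E t \<subseteq> E (real (nat \<lceil>t\<rceil>))"
        using monoD[OF \<open>mono E\<close> real_nat_ceiling_ge] .
      ultimately show "\<omega> \<in> (\<Union>n. E (real n))" by blast
    qed
  qed (use E_space in blast)
  ultimately have lim_nat: "(\<lambda>n. prob (E (real n))) \<longlonglongrightarrow> 1"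
    by (simp add: prob_space)
  show ?thesis
  proof (rule tendsto_sandwich[OF _ _ _ tendsto_const])
    show "eventually (\<lambda>t. prob (E (real (nat \<lfloor>t\<rfloor>))) \<le> prob (E t)) at_top"
      using eventually_ge_at_top[of 0]
      by eventually_elim (intro finite_measure_mono monoD[OF \<open>mono E\<close>]; simp)
    show "eventually (\<lambda>t. prob (E t) \<le> 1) at_top" by simp
    show "((\<lambda>t. prob (E (real (nat \<lfloor>t\<rfloor>)))) \<longlongrightarrow> 1) at_top"
      using filterlim_compose[OF lim_nat filterlim_compose[OF filterlim_nat_sequentially
            filterlim_floor_sequentially]] by (simp add: o_def)
  qed
qed

lemma cube_borel[measurable]: "cube N \<in> sets borel"
  unfolding cube_def by measurable

lemma cube_mono: "N \<le> N' \<Longrightarrow> cube N \<subseteq> cube N'"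
  unfolding cube_def by (auto intro: order_trans)

lemma mem_cube_norm: "x \<in> cube (norm x)"
  unfolding cube_def by (simp add: component_le_norm_cart)

lemma (in prob_space) tendsto_prob_in_cube:
  fixes X :: "'i \<Rightarrow> 'a \<Rightarrow> real ^ 'd"
  assumes "finite I" and [measurable]: "\<And>i. i \<in> I \<Longrightarrow> X i \<in> borel_measurable M"
  shows "((\<lambda>N. prob {\<omega> \<in> space M. \<forall>i\<in>I. X i \<omega> \<in> cube N}) \<longlongrightarrow> 1) at_top"
proof (rule tendsto_prob_mono_at_top)
  show "{\<omega> \<in> space M. \<forall>i\<in>I. X i \<omega> \<in> cube N} \<in> events" for N
    using \<open>finite I\<close> by measurable
  show "mono (\<lambda>N. {\<omega> \<in> space M. \<forall>i\<in>I. X i \<omega> \<in> cube N})"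
    unfolding mono_def using cube_mono by blast
  show "\<exists>N. \<omega> \<in> {\<omega> \<in> space M. \<forall>i\<in>I. X i \<omega> \<in> cube N}" if "\<omega> \<in> space M" for \<omega>
  proof (intro exI CollectI conjI ballI)
    fix i assume "i \<in> I"
    then have "norm (X i \<omega>) \<le> (\<Sum>i\<in>I. norm (X i \<omega>))"
      using \<open>finite I\<close> by (intro member_le_sum) auto
    then show "X i \<omega> \<in> cube (\<Sum>i\<in>I. norm (X i \<omega>))"
      using cube_mono mem_cube_norm by blast
  qed fact
qed

theorem mainTheorem6:
  fixes M :: "'w measure" and X :: "nat \<Rightarrow> 'w \<Rightarrow> real ^ 'd"
    and a :: "nat \<Rightarrow> real" and m :: nat
    and M' :: "real \<Rightarrow> 'v measure" and Y :: "real \<Rightarrow> nat \<Rightarrow> 'v \<Rightarrow> real ^ 'd"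
  assumes P: "prob_space M"
    and indep: "prob_space.indep_vars M (\<lambda>_. borel) X {..<m}"
    and fin: "\<forall>j<m. \<exists>f. information_space.finite_entropy M (exp 1) lborel (X j) f"
    and nz: "\<exists>j<m. a j \<noteq> 0"
    and finS: "\<exists>f. information_space.finite_entropy M (exp 1) lborel
                   (\<lambda>\<omega>. \<Sum>j<m. a j *\<^sub>R X j \<omega>) f"
    and Ylaw: "\<forall>N>0. (\<forall>j<m. measure M {\<omega> \<in> space M. X j \<omega> \<in> cube N} > 0) \<longrightarrow>
        prob_space (M' N) \<and>
        prob_space.indep_vars (M' N) (\<lambda>_. borel) (Y N) {..<m} \<and>
        (\<forall>j<m. \<forall>A\<in>sets borel.
           measure (M' N) {\<omega> \<in> space (M' N). Y N j \<omega> \<in> A} =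
           measure M {\<omega> \<in> space M. X j \<omega> \<in> A \<inter> cube N}
             / measure M {\<omega> \<in> space M. X j \<omega> \<in> cube N})"
  shows "((\<lambda>N. prob_space.entropy (M' N) (exp 1) lborel (\<lambda>\<omega>. \<Sum>j<m. a j *\<^sub>R Y N j \<omega>))
           \<longlongrightarrow> prob_space.entropy M (exp 1) lborel (\<lambda>\<omega>. \<Sum>j<m. a j *\<^sub>R X j \<omega>)) at_top"
proof -
  interpret prob_space M by (rule P)
  interpret information_space M "exp 1" by standard simp
  have [measurable]: "X j \<in> borel_measurable M" if "j \<in> {..<m}" for j
    using indep that by (simp add: indep_vars_def)
  define E where "E N = {\<omega> \<in> space M. \<forall>j\<in>{..<m}. X j \<omega> \<in> cube N}" for N
  have E_sets: "E N \<in> events" for N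
    unfolding E_def by measurable
  have "mono E"
    unfolding mono_def E_def using cube_mono by blast
  have E_lim: "((\<lambda>N. prob (E N)) \<longlongrightarrow> 1) at_top"
    unfolding E_def by (intro tendsto_prob_in_cube) auto
  obtain f where f: "finite_entropy lborel (\<lambda>\<omega>. \<Sum>j<m. a j *\<^sub>R X j \<omega>) f"
    using finS by blast
  have "((\<lambda>N. prob_space.entropy (uniform_measure M (E N)) (exp 1) lborel (\<lambda>\<omega>. \<Sum>j<m. a j *\<^sub>R X j \<omega>))
      \<longlongrightarrow> entropy (exp 1) lborel (\<lambda>\<omega>. \<Sum>j<m. a j *\<^sub>R X j \<omega>)) at_top"
    using finite_entropy_distributed[OF f] finite_entropy_integrable[OF f] finite_entropy_nn[OF f]
    by (intro entropy_uniform_measure_tendsto[OF P sigma_finite_lborel _ _ _ E_sets \<open>mono E\<close> E_lim])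
      (auto simp: log_def)
  moreover have "eventually (\<lambda>N. prob_space.entropy (uniform_measure M (E N)) (exp 1) lborel
        (\<lambda>\<omega>. \<Sum>j<m. a j *\<^sub>R X j \<omega>) =
      prob_space.entropy (M' N) (exp 1) lborel (\<lambda>\<omega>. \<Sum>j<m. a j *\<^sub>R Y N j \<omega>)) at_top"
    using eventually_gt_at_top[of 0] order_tendstoD(1)[OF E_lim zero_less_one]
  proof eventually_elim
    case (elim N)
    have "prob (E N) \<le> prob {\<omega> \<in> space M. X j \<omega> \<in> cube N}" if "j < m" for j
      using that by (intro finite_measure_mono) (auto simp: E_def)
    then have "0 < prob {\<omega> \<in> space M. X j \<omega> \<in> cube N}" if "j < m" for j
      using that elim(2) by (meson less_le_trans)
    with Ylaw elim have "prob_space (M' N)"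
      and "distr (M' N) lborel (\<lambda>\<omega>. \<Sum>j<m. a j *\<^sub>R Y N j \<omega>) =
        distr (uniform_measure M (E N)) lborel (\<lambda>\<omega>. \<Sum>j<m. a j *\<^sub>R X j \<omega>)"
      using nz unfolding E_def by (auto intro!: distr_sum_indep_vars_conditioned[OF P _ _ indep])
    moreover have "prob_space (uniform_measure M (E N))"
      using elim(2) by (intro prob_space_uniform_measure) (simp_all add: emeasure_eq_measure)
    ultimately show ?case
      by (simp add: prob_space.entropy_def)
  qed
  ultimately show ?thesis
    by (rule tendsto_cong[THEN iffD1, rotated])
qed

end
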